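(* If $G$ is a hypo-unique domination graph of order $n\geq 3$, then $G$ is $2$-edge-connected and $\delta(G)\geq 2$. Moreover, the unicyclic hypo-unique domination graphs are precisely the cycles $C_{3k+1}$, $k\geq 1$.
   Context: All graphs are finite, simple and undirected. A set $D\subseteq V(G)$ is dominating if every vertex of $G$ not in $D$ has a neighbor in $D$; $\gamma(G)$ is the minimum size of a dominating set, and a dominating set of size $\gamma(G)$ is a $\gamma$-set. $G$ is a hypo-unique domination graph if $G$ has at least two $\gamma$-sets but for every $v\in V(G)$ the graph $G-v$ has exactly one $\gamma$-set. $\delta(G)$ is the minimum degree; a unicyclic graph is a connected graph containing exactly one cycle. *)

theory Defs
  imports Main
begin

definition simple_graph :: "'a set \<Rightarrow> ('a \<Rightarrow> 'a \<Rightarrow> bool) \<Rightarrow> bool" where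
  "simple_graph V E \<longleftrightarrow> finite V \<and> (\<forall>x y. E x y \<longrightarrow> E y x) \<and> (\<forall>x. \<not> E x x)
     \<and> (\<forall>x y. E x y \<longrightarrow> x \<in> V \<and> y \<in> V)"

definition dominating :: "'a set \<Rightarrow> ('a \<Rightarrow> 'a \<Rightarrow> bool) \<Rightarrow> 'a set \<Rightarrow> bool" where
  "dominating V E D \<longleftrightarrow> D \<subseteq> V \<and> (\<forall>v \<in> V - D. \<exists>u \<in> D. E v u)"

definition gamma :: "'a set \<Rightarrow> ('a \<Rightarrow> 'a \<Rightarrow> bool) \<Rightarrow> nat" where
  "gamma V E = Min (card ` {D. dominating V E D})"

definition gamma_sets :: "'a set \<Rightarrow> ('a \<Rightarrow> 'a \<Rightarrow> bool) \<Rightarrow> 'a set set" where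
  "gamma_sets V E = {D. dominating V E D \<and> card D = gamma V E}"

definition del_vertex_E :: "('a \<Rightarrow> 'a \<Rightarrow> bool) \<Rightarrow> 'a \<Rightarrow> 'a \<Rightarrow> 'a \<Rightarrow> bool" where
  "del_vertex_E E v = (\<lambda>x y. E x y \<and> x \<noteq> v \<and> y \<noteq> v)"

definition hypo_unique_domination :: "'a set \<Rightarrow> ('a \<Rightarrow> 'a \<Rightarrow> bool) \<Rightarrow> bool" where
  "hypo_unique_domination V E \<longleftrightarrow>
     card (gamma_sets V E) \<ge> 2 \<and>
     (\<forall>v \<in> V. card (gamma_sets (V - {v}) (del_vertex_E E v)) = 1)"

definition connected_graph :: "'a set \<Rightarrow> ('a \<Rightarrow> 'a \<Rightarrow> bool) \<Rightarrow> bool" where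
  "connected_graph V E \<longleftrightarrow> V \<noteq> {} \<and>
     (\<forall>u \<in> V. \<forall>w \<in> V. (\<lambda>x y. E x y \<and> x \<in> V \<and> y \<in> V)\<^sup>*\<^sup>* u w)"

definition del_edge_E :: "('a \<Rightarrow> 'a \<Rightarrow> bool) \<Rightarrow> 'a \<Rightarrow> 'a \<Rightarrow> 'a \<Rightarrow> 'a \<Rightarrow> bool" where
  "del_edge_E E a b = (\<lambda>x y. E x y \<and> {x, y} \<noteq> {a, b})"

definition two_edge_connected :: "'a set \<Rightarrow> ('a \<Rightarrow> 'a \<Rightarrow> bool) \<Rightarrow> bool" where
  "two_edge_connected V E \<longleftrightarrow> connected_graph V E \<and>
     (\<forall>a b. E a b \<longrightarrow> connected_graph V (del_edge_E E a b))"

definition degree :: "'a set \<Rightarrow> ('a \<Rightarrow> 'a \<Rightarrow> bool) \<Rightarrow> 'a \<Rightarrow> nat" where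
  "degree V E v = card {u \<in> V. E v u}"

definition min_degree :: "'a set \<Rightarrow> ('a \<Rightarrow> 'a \<Rightarrow> bool) \<Rightarrow> nat" where
  "min_degree V E = Min (degree V E ` V)"

text \<open>A cycle of G, given as a list of distinct vertices (length at least 3) with
consecutive (cyclically) vertices adjacent; the cycle as a subgraph is identified by
its edge set.\<close>
definition is_cycle :: "'a set \<Rightarrow> ('a \<Rightarrow> 'a \<Rightarrow> bool) \<Rightarrow> 'a list \<Rightarrow> bool" where
  "is_cycle V E xs \<longleftrightarrow> distinct xs \<and> length xs \<ge> 3 \<and> set xs \<subseteq> V \<and>
     (\<forall>i < length xs. E (xs ! i) (xs ! ((i + 1) mod length xs)))"

definition cycle_edges :: "'a list \<Rightarrow> 'a set set" where
  "cycle_edges xs = {{xs ! i, xs ! ((i + 1) mod length xs)} | i. i < length xs}"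

definition unicyclic :: "'a set \<Rightarrow> ('a \<Rightarrow> 'a \<Rightarrow> bool) \<Rightarrow> bool" where
  "unicyclic V E \<longleftrightarrow> connected_graph V E \<and>
     (\<exists>!C. C \<in> {cycle_edges xs | xs. is_cycle V E xs})"

definition cycle_graph_E :: "nat \<Rightarrow> nat \<Rightarrow> nat \<Rightarrow> bool" where
  "cycle_graph_E n i j \<longleftrightarrow> i < n \<and> j < n \<and> i \<noteq> j \<and>
     (j = (i + 1) mod n \<or> i = (j + 1) mod n)"

definition isomorphic_to_cycle :: "'a set \<Rightarrow> ('a \<Rightarrow> 'a \<Rightarrow> bool) \<Rightarrow> nat \<Rightarrow> bool" where
  "isomorphic_to_cycle V E n \<longleftrightarrow> (\<exists>f. bij_betw f V {0..<n} \<and>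
     (\<forall>x \<in> V. \<forall>y \<in> V. E x y \<longleftrightarrow> cycle_graph_E n (f x) (f y)))"

end

(*
  In a hypo-unique domination graph G every vertex v is critical, i.e. gamma(G - v) < gamma(G):
  at most one gamma-set avoids a noncritical vertex, and chasing private neighbours through
  the (at least three) gamma-sets of G yields a second gamma-set of G - v. Criticality gives
  every vertex two neighbours. If a cut had at most one crossing edge ab, the unique
  gamma-sets of G - a and G - b could be recombined across it; this puts a into the
  gamma-set of G - b, impossible when ab is an edge by criticality of b, and otherwise
  forces all of V - {b} into it. Hence G is 2-edge-connected, so a unicyclic G is a cycle
  C_n, and C_n is hypo-unique iff the path P_(n-1) has a unique gamma-set, i.e. iff 3
  divides n - 1.
*)
theory Submission
  imports Defs "HOL-Number_Theory.Cong"
begin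

section \<open>Domination numbers, isomorphisms and edge cuts\<close>

lemma dominating_refl: "dominating V E V"
  by (simp add: dominating_def)

lemma finite_dominating_sets: "finite V \<Longrightarrow> finite {D. dominating V E D}"
  by (rule finite_subset[of _ "Pow V"]) (auto simp: dominating_def)

lemma finite_gamma_sets: "finite V \<Longrightarrow> finite (gamma_sets V E)"
  unfolding gamma_sets_def by (rule finite_subset[OF _ finite_dominating_sets]) auto

lemma gamma_le_card: "finite V \<Longrightarrow> dominating V E D \<Longrightarrow> gamma V E \<le> card D"
  unfolding gamma_def by (rule Min_le) (auto intro: finite_dominating_sets)

lemma gamma_attained:
  assumes "finite V"
  obtains D where "dominating V E D" "card D = gamma V E"
proof -
  have "gamma V E \<in> card ` {D. dominating V E D}"
    unfolding gamma_def using assms dominating_refl[of V E]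
    by (intro Min_in) (auto intro: finite_dominating_sets)
  thus thesis using that by auto
qed

lemma two_le_card_gamma_sets:
  assumes "finite V" "D1 \<in> gamma_sets V E" "D2 \<in> gamma_sets V E" "D1 \<noteq> D2"
  shows "2 \<le> card (gamma_sets V E)"
proof -
  have "card {D1, D2} \<le> card (gamma_sets V E)"
    using assms by (intro card_mono finite_gamma_sets) auto
  thus ?thesis using assms(4) by simp
qed

lemma two_distinct_elements:
  assumes "2 \<le> card A"
  obtains x y where "x \<in> A" "y \<in> A" "x \<noteq> y"
  using assms card_le_Suc0_iff_eq[of A] card.infinite[of A] by fastforce

definition graph_iso ::
    "('a \<Rightarrow> 'b) \<Rightarrow> 'a set \<Rightarrow> ('a \<Rightarrow> 'a \<Rightarrow> bool) \<Rightarrow> 'b set \<Rightarrow> ('b \<Rightarrow> 'b \<Rightarrow> bool) \<Rightarrow> bool" where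
  "graph_iso f V E W E' \<longleftrightarrow> bij_betw f V W \<and> (\<forall>x\<in>V. \<forall>y\<in>V. E x y \<longleftrightarrow> E' (f x) (f y))"

lemma isomorphic_to_cycle_iff_graph_iso:
  "isomorphic_to_cycle V E n \<longleftrightarrow> (\<exists>f. graph_iso f V E {0..<n} (cycle_graph_E n))"
  by (simp add: isomorphic_to_cycle_def graph_iso_def)

context
  fixes f V E W E'
  assumes iso: "graph_iso f V E W E'"
begin

private lemma inj: "inj_on f V" and image: "f ` V = W"
  using iso by (auto simp: graph_iso_def bij_betw_def)

private lemma adj: "x \<in> V \<Longrightarrow> y \<in> V \<Longrightarrow> E' (f x) (f y) \<longleftrightarrow> E x y"
  using iso by (simp add: graph_iso_def)

lemma dominating_image_iff:
  assumes D: "D \<subseteq> V"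
  shows "dominating W E' (f ` D) \<longleftrightarrow> dominating V E D"
proof -
  have out: "f x \<in> W - f ` D \<longleftrightarrow> x \<in> V - D" if "x \<in> V" for x
    using that D inj image by (auto dest: inj_onD)
  have "(\<forall>w\<in>W - f ` D. \<exists>u\<in>f ` D. E' w u) \<longleftrightarrow> (\<forall>x\<in>V - D. \<exists>u\<in>D. E x u)"
  proof -
    have "(\<forall>w\<in>W - f ` D. \<exists>u\<in>f ` D. E' w u) \<longleftrightarrow> (\<forall>x\<in>V. f x \<in> W - f ` D \<longrightarrow> (\<exists>u\<in>D. E' (f x) (f u)))"
      using image by blast
    also have "\<dots> \<longleftrightarrow> (\<forall>x\<in>V - D. \<exists>u\<in>D. E x u)"
    proof -
      have "(\<exists>u\<in>D. E' (f x) (f u)) \<longleftrightarrow> (\<exists>u\<in>D. E x u)" if "x \<in> V" for x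
        using that adj D by blast
      thus ?thesis using out by auto
    qed
    finally show ?thesis .
  qed
  moreover have "f ` D \<subseteq> W" using D image by blast
  ultimately show ?thesis using D by (simp add: dominating_def)
qed

lemma dominating_sets_iso: "{D'. dominating W E' D'} = image f ` {D. dominating V E D}"
proof (intro set_eqI iffI)
  fix D' assume "D' \<in> {D'. dominating W E' D'}"
  hence dom: "dominating W E' D'" and "D' \<subseteq> W" by (auto simp: dominating_def)
  hence eq: "f ` (V \<inter> f -` D') = D'" using image by blast
  hence "dominating V E (V \<inter> f -` D')"
    using dominating_image_iff[of "V \<inter> f -` D'"] dom by simp
  thus "D' \<in> image f ` {D. dominating V E D}" using eq by blast
next
  fix D' assume "D' \<in> image f ` {D. dominating V E D}"
  then obtain D where "dominating V E D" "D' = f ` D" by blast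
  thus "D' \<in> {D'. dominating W E' D'}"
    using dominating_image_iff[of D] by (simp add: dominating_def)
qed

private lemma card_image_subset: "D \<subseteq> V \<Longrightarrow> card (f ` D) = card D"
  using inj by (meson card_image inj_on_subset)

lemma gamma_iso: "gamma W E' = gamma V E"
proof -
  have "card ` {D'. dominating W E' D'} = card ` {D. dominating V E D}"
    unfolding dominating_sets_iso image_image
    by (intro image_cong) (auto simp: card_image_subset dominating_def)
  thus ?thesis by (simp add: gamma_def)
qed

lemma gamma_sets_iso: "gamma_sets W E' = image f ` gamma_sets V E"
proof -
  have "gamma_sets W E' = {D' \<in> image f ` {D. dominating V E D}. card D' = gamma V E}"
    using dominating_sets_iso by (auto simp: gamma_sets_def gamma_iso)
  also have "\<dots> = image f ` gamma_sets V E"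
    unfolding gamma_sets_def by (auto simp: card_image_subset dominating_def)
  finally show ?thesis .
qed

lemma card_gamma_sets_iso: "card (gamma_sets W E') = card (gamma_sets V E)"
proof -
  have "inj_on (image f) (gamma_sets V E)"
    by (rule inj_on_subset[OF inj_on_image_Pow[OF inj]])
       (auto simp: gamma_sets_def dominating_def)
  thus ?thesis by (simp add: gamma_sets_iso card_image)
qed

lemma graph_iso_del_vertex:
  assumes "v \<in> V"
  shows "graph_iso f (V - {v}) (del_vertex_E E v) (W - {f v}) (del_vertex_E E' (f v))"
proof -
  have "f ` (V - {v}) = W - {f v}" using inj image assms by (auto dest: inj_onD)
  hence "bij_betw f (V - {v}) (W - {f v})"
    using inj by (metis Diff_subset bij_betw_imageI inj_on_subset)
  thus ?thesis using adj inj assms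
    by (auto simp: graph_iso_def del_vertex_E_def dest: inj_onD)
qed

end

lemma hypo_unique_domination_iso:
  assumes iso: "graph_iso f V E W E'"
  shows "hypo_unique_domination W E' \<longleftrightarrow> hypo_unique_domination V E"
proof -
  have "f ` V = W" using iso by (simp add: graph_iso_def bij_betw_def)
  thus ?thesis
    using card_gamma_sets_iso[OF iso] card_gamma_sets_iso[OF graph_iso_del_vertex[OF iso]]
    unfolding hypo_unique_domination_def by auto
qed

lemma connected_graphI:
  assumes "V \<noteq> {}"
    and no_closed_part: "\<And>V1 u w. V1 \<subseteq> V \<Longrightarrow> u \<in> V1 \<Longrightarrow> w \<in> V - V1 \<Longrightarrow>
           \<forall>x y. E x y \<longrightarrow> x \<in> V1 \<longrightarrow> y \<in> V \<longrightarrow> y \<in> V1 \<Longrightarrow> False"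
  shows "connected_graph V E"
  unfolding connected_graph_def
proof (intro conjI ballI)
  let ?R = "\<lambda>x y. E x y \<and> x \<in> V \<and> y \<in> V"
  fix u w assume u: "u \<in> V" and w: "w \<in> V"
  show "?R\<^sup>*\<^sup>* u w"
  proof (rule ccontr)
    assume "\<not> ?R\<^sup>*\<^sup>* u w"
    thus False
      using no_closed_part[of "{x \<in> V. ?R\<^sup>*\<^sup>* u x}" u w] u w
      by (auto intro: rtranclp.rtrancl_into_rtrancl)
  qed
qed (fact assms(1))

lemma two_edge_connectedI:
  assumes sg: "simple_graph V E" and "V \<noteq> {}"
    and no_cut: "\<And>V1 a b. V1 \<subseteq> V \<Longrightarrow> a \<in> V1 \<Longrightarrow> b \<in> V - V1 \<Longrightarrow>
           \<forall>x y. E x y \<longrightarrow> x \<in> V1 \<longrightarrow> y \<in> V - V1 \<longrightarrow> x = a \<and> y = b \<Longrightarrow> False"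
  shows "two_edge_connected V E"
  unfolding two_edge_connected_def
proof (intro conjI allI impI)
  show "connected_graph V E"
  proof (rule connected_graphI[OF \<open>V \<noteq> {}\<close>])
    fix V1 u w assume "V1 \<subseteq> V" "u \<in> V1" "w \<in> V - V1"
      and "\<forall>x y. E x y \<longrightarrow> x \<in> V1 \<longrightarrow> y \<in> V \<longrightarrow> y \<in> V1"
    thus False using no_cut[of V1 u w] by blast
  qed
  fix a b assume ab: "E a b"
  show "connected_graph V (del_edge_E E a b)"
  proof (rule connected_graphI[OF \<open>V \<noteq> {}\<close>])
    fix V1 u w
    assume V1: "V1 \<subseteq> V" "u \<in> V1" "w \<in> V - V1"
      and closed: "\<forall>x y. del_edge_E E a b x y \<longrightarrow> x \<in> V1 \<longrightarrow> y \<in> V \<longrightarrow> y \<in> V1"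
    have cross: "(x = a \<and> y = b) \<or> (x = b \<and> y = a)"
      if "E x y" "x \<in> V1" "y \<in> V - V1" for x y
      using closed that by (auto simp: del_edge_E_def doubleton_eq_iff)
    have "a \<in> V" "b \<in> V" using sg ab by (auto simp: simple_graph_def)
    then consider "a \<in> V1" "b \<in> V - V1" | "b \<in> V1" "a \<in> V - V1" | "a \<in> V1 \<longleftrightarrow> b \<in> V1"
      by blast
    thus False
    proof cases
      case 1 thus False using no_cut[OF V1(1) 1] cross by blast
    next
      case 2 thus False using no_cut[OF V1(1) 2] cross by blast
    next
      case 3 show False by (rule no_cut[OF V1]) (use cross 3 in blast)
    qed
  qed
qed

section \<open>Hypo-unique domination graphs\<close>

locale hypo_unique_graph =
  fixes V :: "'a set" and E :: "'a \<Rightarrow> 'a \<Rightarrow> bool"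
  assumes simple: "simple_graph V E"
    and hypo_unique: "hypo_unique_domination V E"
    and card_V: "card V \<ge> 3"
begin

lemma finite_V: "finite V"
  and edge_sym: "E x y \<Longrightarrow> E y x"
  and edge_irrefl: "\<not> E x x"
  and edge_in_V: "E x y \<Longrightarrow> x \<in> V" "E x y \<Longrightarrow> y \<in> V"
  using simple by (auto simp: simple_graph_def)

lemma V_nonempty: "V \<noteq> {}"
  using card_V by auto

abbreviation \<gamma> :: nat where "\<gamma> \<equiv> gamma V E"
abbreviation \<Gamma> :: "'a set set" where "\<Gamma> \<equiv> gamma_sets V E"

definition gamma_del :: "'a \<Rightarrow> nat" where
  "gamma_del v = gamma (V - {v}) (del_vertex_E E v)"

text \<open>Only meaningful for v \<in> V, where G - v has exactly one \<gamma>-set.\<close>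
definition del_gamma_set :: "'a \<Rightarrow> 'a set" where
  "del_gamma_set v = (THE D. D \<in> gamma_sets (V - {v}) (del_vertex_E E v))"

definition critical :: "'a \<Rightarrow> bool" where
  "critical v \<longleftrightarrow> gamma_del v < \<gamma>"

lemma dominating_iff: "dominating V E D \<longleftrightarrow> D \<subseteq> V \<and> (\<forall>x\<in>V - D. \<exists>u\<in>D. E x u)"
  by (simp add: dominating_def)

lemma dominating_del_iff:
  "dominating (V - {v}) (del_vertex_E E v) D \<longleftrightarrow> D \<subseteq> V - {v} \<and> (\<forall>x\<in>V - {v} - D. \<exists>u\<in>D. E x u)"
  unfolding dominating_def del_vertex_E_def by auto

lemma gamma_sets_iff: "D \<in> \<Gamma> \<longleftrightarrow> dominating V E D \<and> card D = \<gamma>"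
  by (simp add: gamma_sets_def)

lemma gamma_le: "dominating V E D \<Longrightarrow> \<gamma> \<le> card D"
  using gamma_le_card finite_V by blast

lemma gamma_setI: "dominating V E D \<Longrightarrow> card D \<le> \<gamma> \<Longrightarrow> D \<in> \<Gamma>"
  using gamma_le gamma_sets_iff by fastforce

lemma gamma_set_subset: "D \<in> \<Gamma> \<Longrightarrow> D \<subseteq> V"
  and gamma_set_finite: "D \<in> \<Gamma> \<Longrightarrow> finite D"
  using finite_V finite_subset by (auto simp: gamma_sets_iff dominating_iff)

lemma gamma_set_dominates: "D \<in> \<Gamma> \<Longrightarrow> x \<in> V - D \<Longrightarrow> \<exists>u\<in>D. E x u"
  by (simp add: gamma_sets_iff dominating_iff)

lemma two_gamma_sets: obtains D1 D2 where "D1 \<in> \<Gamma>" "D2 \<in> \<Gamma>" "D1 \<noteq> D2"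
  using hypo_unique two_distinct_elements by (metis hypo_unique_domination_def)

lemma gamma_pos: "\<gamma> \<ge> 1"
proof -
  obtain D where D: "D \<in> \<Gamma>" using two_gamma_sets by blast
  hence "D \<noteq> {}" using V_nonempty by (auto simp: gamma_sets_iff dominating_iff)
  thus ?thesis using D gamma_set_finite gamma_sets_iff by (metis card_0_eq less_one not_less)
qed

lemma gamma_del_le: "dominating (V - {v}) (del_vertex_E E v) D \<Longrightarrow> gamma_del v \<le> card D"
  unfolding gamma_del_def using gamma_le_card finite_V by blast

lemma del_gamma_set_unique:
  assumes "v \<in> V"
  shows "\<exists>!D. D \<in> gamma_sets (V - {v}) (del_vertex_E E v)"
  using hypo_unique assms unfolding hypo_unique_domination_def
  by (metis card_1_singletonE singleton_iff)

lemma del_gamma_set: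
  assumes "v \<in> V"
  shows "dominating (V - {v}) (del_vertex_E E v) (del_gamma_set v)"
    and "card (del_gamma_set v) = gamma_del v"
  using theI'[OF del_gamma_set_unique[OF assms]]
  by (simp_all add: del_gamma_set_def gamma_sets_def gamma_del_def)

lemma del_gamma_set_subset: "v \<in> V \<Longrightarrow> del_gamma_set v \<subseteq> V - {v}"
  using del_gamma_set(1) dominating_del_iff by blast

lemma del_gamma_set_finite: "v \<in> V \<Longrightarrow> finite (del_gamma_set v)"
  using del_gamma_set_subset finite_V finite_subset by blast

lemma del_gamma_set_eqI:
  assumes "v \<in> V" "dominating (V - {v}) (del_vertex_E E v) D" "card D \<le> gamma_del v"
  shows "D = del_gamma_set v"
proof -
  have "D \<in> gamma_sets (V - {v}) (del_vertex_E E v)"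
    using assms gamma_del_le[of v D] by (simp add: gamma_sets_def gamma_del_def)
  moreover have "del_gamma_set v \<in> gamma_sets (V - {v}) (del_vertex_E E v)"
    using del_gamma_set[OF assms(1)] by (simp add: gamma_sets_def gamma_del_def)
  ultimately show ?thesis using del_gamma_set_unique[OF assms(1)] by blast
qed

lemma gamma_le_gamma_del_Suc: "v \<in> V \<Longrightarrow> \<gamma> \<le> gamma_del v + 1"
proof -
  assume v: "v \<in> V"
  have "dominating V E (insert v (del_gamma_set v))"
    using del_gamma_set[OF v] v unfolding dominating_del_iff dominating_iff by blast
  hence "\<gamma> \<le> card (insert v (del_gamma_set v))" by (rule gamma_le)
  also have "\<dots> \<le> card (del_gamma_set v) + 1" by (simp add: card_insert_le_m1)
  finally show ?thesis using del_gamma_set(2)[OF v] by simp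
qed

lemma critical_gamma_del: "v \<in> V \<Longrightarrow> critical v \<Longrightarrow> gamma_del v = \<gamma> - 1"
  using gamma_le_gamma_del_Suc critical_def by fastforce

lemma dominating_del_if_avoids: "dominating V E D \<Longrightarrow> v \<notin> D \<Longrightarrow> dominating (V - {v}) (del_vertex_E E v) D"
  unfolding dominating_iff dominating_del_iff by blast

lemma gamma_set_avoiding_noncritical:
  assumes "v \<in> V" "\<not> critical v" "D \<in> \<Gamma>" "v \<notin> D"
  shows "D = del_gamma_set v"
  using assms dominating_del_if_avoids[of D v]
  by (intro del_gamma_set_eqI) (auto simp: gamma_sets_iff critical_def)

lemma critical_if_avoided_twice:
  assumes "v \<in> V" "D1 \<in> \<Gamma>" "D2 \<in> \<Gamma>" "D1 \<noteq> D2" "v \<notin> D1" "v \<notin> D2"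
  shows "critical v"
  using assms gamma_set_avoiding_noncritical by blast

lemma noncritical_private_neighbour:
  assumes v: "v \<in> V" "\<not> critical v" and D: "D \<in> \<Gamma>" "v \<in> D"
  obtains p where "p \<in> V" "p \<notin> D" "E p v" "\<forall>x\<in>D. E p x \<longrightarrow> x = v"
proof -
  have "\<not> dominating (V - {v}) (del_vertex_E E v) (D - {v})"
  proof
    assume "dominating (V - {v}) (del_vertex_E E v) (D - {v})"
    hence "gamma_del v \<le> \<gamma> - 1"
      using gamma_del_le D gamma_set_finite by (fastforce simp: gamma_sets_iff)
    thus False using v gamma_pos by (simp add: critical_def)
  qed
  then obtain p where "p \<in> V - {v} - (D - {v})" "\<forall>u\<in>D - {v}. \<not> E p u"
    using D gamma_set_subset unfolding dominating_del_iff by blast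
  moreover obtain u where "u \<in> D" "E p u" using calculation(1) D gamma_set_dominates by blast
  ultimately show thesis using that by blast
qed

lemma critical_del_gamma_set_nonadjacent:
  assumes v: "v \<in> V" "critical v" and x: "x \<in> del_gamma_set v"
  shows "\<not> E v x"
proof
  assume "E v x"
  hence "dominating V E (del_gamma_set v)"
    using del_gamma_set(1)[OF v(1)] x edge_sym unfolding dominating_del_iff dominating_iff by blast
  thus False using gamma_le del_gamma_set(2)[OF v(1)] v(2) by (fastforce simp: critical_def)
qed

lemma critical_insert_gamma_set:
  assumes v: "v \<in> V" "critical v" and t: "t = v \<or> E v t"
  shows "insert t (del_gamma_set v) \<in> \<Gamma>"
proof (rule gamma_setI)
  have "t \<in> V" using t v edge_in_V by blast
  thus "dominating V E (insert t (del_gamma_set v))"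
    using del_gamma_set(1)[OF v(1)] t unfolding dominating_del_iff dominating_iff by auto
  have "t \<notin> del_gamma_set v"
    using t del_gamma_set_subset[OF v(1)] critical_del_gamma_set_nonadjacent[OF v] by blast
  thus "card (insert t (del_gamma_set v)) \<le> \<gamma>"
    using del_gamma_set_finite[OF v(1)] del_gamma_set(2)[OF v(1)] critical_gamma_del[OF v] gamma_pos
    by simp
qed

lemma no_isolated_vertex:
  assumes v: "v \<in> V"
  obtains u where "E v u"
proof -
  have "D = insert v (del_gamma_set v)" if "\<not> (\<exists>u. E v u)" and D: "D \<in> \<Gamma>" for D
  proof -
    have vD: "v \<in> D" using D v that(1) edge_sym by (auto simp: gamma_sets_iff dominating_iff)
    have "dominating (V - {v}) (del_vertex_E E v) (D - {v})"
      using D gamma_set_subset[OF D] gamma_set_dominates[OF D] that(1) edge_sym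
      unfolding dominating_del_iff by blast
    moreover have "card (D - {v}) = \<gamma> - 1" using D vD gamma_set_finite by (simp add: gamma_sets_iff)
    ultimately have "D - {v} = del_gamma_set v"
      using del_gamma_set_eqI[OF v] gamma_le_gamma_del_Suc[OF v] by simp
    thus ?thesis using vD by blast
  qed
  thus thesis using that two_gamma_sets by metis
qed

lemma gamma_ge_2: "\<gamma> \<ge> 2"
proof (rule ccontr)
  assume "\<not> \<gamma> \<ge> 2"
  hence \<gamma>1: "\<gamma> = 1" using gamma_pos by simp
  obtain D1 D2 where D: "D1 \<in> \<Gamma>" "D2 \<in> \<Gamma>" "D1 \<noteq> D2" by (rule two_gamma_sets)
  then obtain x y where xy: "D1 = {x}" "D2 = {y}" using \<gamma>1 by (auto simp: gamma_sets_iff card_1_singleton_iff)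
  have "card {x, y} \<le> 2" by (cases "x = y") auto
  hence "\<not> V \<subseteq> {x, y}" using card_V card_mono[of "{x, y}" V] by auto
  then obtain z where z: "z \<in> V" "z \<noteq> x" "z \<noteq> y" by blast
  hence "critical z" using critical_if_avoided_twice[OF z(1) D] xy by blast
  hence "del_gamma_set z = {}"
    using critical_gamma_del[OF z(1)] del_gamma_set(2)[OF z(1)] del_gamma_set_finite[OF z(1)] \<gamma>1 by simp
  moreover have "x \<in> V - {z}" using z D gamma_set_subset xy by blast
  ultimately show False using del_gamma_set(1)[OF z(1)] unfolding dominating_del_iff by blast
qed

lemma private_neighbour_critical:
  assumes w: "w \<in> V" and D: "D1 \<in> \<Gamma>" "D2 \<in> \<Gamma>" "D1 \<noteq> D2" and v: "v \<in> D1" "v \<in> D2"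
    and pn: "w \<notin> D1" "E w v" "\<forall>x\<in>D1. E w x \<longrightarrow> x = v"
  shows "critical w"
proof (rule ccontr)
  assume noncrit: "\<not> critical w"
  have wD2: "w \<in> D2" using critical_if_avoided_twice[OF w D] pn(1) noncrit by blast
  obtain q where q: "q \<in> V" "q \<notin> D2" "E q w" "\<forall>x\<in>D2. E q x \<longrightarrow> x = w"
    using noncritical_private_neighbour[OF w noncrit D(2) wD2] by blast
  have "q \<notin> D1" using pn(3) q(2,3) v(2) edge_sym by blast
  hence crit_q: "critical q" using critical_if_avoided_twice[OF q(1) D] q(2) by blast
  have "w \<notin> insert q (del_gamma_set q)"
    using critical_del_gamma_set_nonadjacent[OF q(1) crit_q] q(2,3) wD2 by blast
  hence "insert q (del_gamma_set q) = D1"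
    using critical_if_avoided_twice[OF w critical_insert_gamma_set[OF q(1) crit_q] D(1)] pn(1) noncrit
    by blast
  thus False using \<open>q \<notin> D1\<close> by blast
qed

lemma noncritical_avoided:
  assumes v: "v \<in> V" "\<not> critical v"
  obtains D where "D \<in> \<Gamma>" "v \<notin> D"
proof (rule ccontr)
  assume "\<not> thesis"
  hence all: "\<forall>D\<in>\<Gamma>. v \<in> D" using that by blast
  obtain D1 D2 where D: "D1 \<in> \<Gamma>" "D2 \<in> \<Gamma>" "D1 \<noteq> D2" by (rule two_gamma_sets)
  obtain p where p: "p \<in> V" "p \<notin> D1" "E p v" "\<forall>x\<in>D1. E p x \<longrightarrow> x = v"
    using noncritical_private_neighbour[OF v D(1)] all D(1) by blast
  have "critical p" using private_neighbour_critical[OF p(1) D _ _ p(2-4)] all D by blast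
  moreover have "v \<notin> insert p (del_gamma_set p)"
    using critical_del_gamma_set_nonadjacent[OF p(1) calculation] p(2,3) all D(1) by blast
  ultimately show False using critical_insert_gamma_set[OF p(1)] all by blast
qed

lemma exists_gamma_set_avoiding:
  assumes v: "v \<in> V"
  obtains D where "D \<in> \<Gamma>" "v \<notin> D"
proof (cases "critical v")
  case True
  obtain t where "E v t" using no_isolated_vertex[OF v] .
  thus thesis
    using that critical_insert_gamma_set[OF v True] del_gamma_set_subset[OF v] edge_irrefl by blast
qed (use noncritical_avoided[OF v] that in blast)

context
  fixes D1 D2 assumes only_two: "\<Gamma> = {D1, D2}" and distinct: "D1 \<noteq> D2"
begin

lemma only_two_disjoint: "D1 \<inter> D2 = {}"
proof (rule ccontr)
  assume "D1 \<inter> D2 \<noteq> {}"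
  then obtain s where s: "s \<in> D1" "s \<in> D2" by blast
  hence "s \<in> V" using gamma_set_subset only_two by blast
  then obtain D where "D \<in> \<Gamma>" "s \<notin> D" by (rule exists_gamma_set_avoiding)
  thus False using only_two s by blast
qed

lemma only_two_cover: "V \<subseteq> D1 \<union> D2"
proof
  fix z assume z: "z \<in> V"
  show "z \<in> D1 \<union> D2"
  proof (rule ccontr)
    assume z_out: "z \<notin> D1 \<union> D2"
    have "D1 \<in> \<Gamma>" "D2 \<in> \<Gamma>" using only_two by auto
    hence "critical z" using critical_if_avoided_twice[OF z _ _ distinct] z_out by simp
    hence "insert z (del_gamma_set z) \<in> {D1, D2}" using critical_insert_gamma_set[OF z] only_two by simp
    thus False using z_out by auto
  qed
qed

lemma only_two_noncritical:
  assumes u: "u \<in> V" shows "\<not> critical u"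
proof
  assume crit: "critical u"
  obtain t where t: "E u t" using no_isolated_vertex[OF u] .
  have "u \<notin> insert t (del_gamma_set u)" using del_gamma_set_subset[OF u] t edge_irrefl by blast
  hence "insert u (del_gamma_set u) \<noteq> insert t (del_gamma_set u)" by blast
  moreover have "insert u (del_gamma_set u) \<in> {D1, D2}" "insert t (del_gamma_set u) \<in> {D1, D2}"
    using critical_insert_gamma_set[OF u crit] t only_two by simp_all
  ultimately have "del_gamma_set u \<subseteq> D1 \<inter> D2" by auto
  hence "gamma_del u = 0" using only_two_disjoint del_gamma_set(2)[OF u] by simp
  thus False using critical_gamma_del[OF u crit] gamma_ge_2 by simp
qed

end

text \<open>With only two \<gamma>-sets D1, D2, every vertex is noncritical, so private neighbours give a
  bijection between D1 and D2; swapping one vertex of D1 for its private neighbour then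
  yields a second \<gamma>-set of G - x besides D2.\<close>
lemma third_gamma_set:
  assumes D: "D1 \<in> \<Gamma>" "D2 \<in> \<Gamma>" "D1 \<noteq> D2"
  shows "\<exists>D\<in>\<Gamma>. D \<noteq> D1 \<and> D \<noteq> D2"
proof (rule ccontr)
  assume "\<not> ?thesis"
  hence only_two: "\<Gamma> = {D1, D2}" using D by auto
  note disj = only_two_disjoint[OF only_two D(3)] and cover = only_two_cover[OF only_two D(3)]
  note noncrit = only_two_noncritical[OF only_two D(3)]
  have "\<forall>x\<in>D1. \<exists>p. p \<in> V \<and> p \<notin> D1 \<and> E p x \<and> (\<forall>y\<in>D1. E p y \<longrightarrow> y = x)"
  proof
    fix x assume x: "x \<in> D1"
    hence "x \<in> V" using gamma_set_subset[OF D(1)] by blast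
    from noncritical_private_neighbour[OF this noncrit[OF this] D(1) x]
    show "\<exists>p. p \<in> V \<and> p \<notin> D1 \<and> E p x \<and> (\<forall>y\<in>D1. E p y \<longrightarrow> y = x)" by blast
  qed
  then obtain f where f: "\<And>x. x \<in> D1 \<Longrightarrow> f x \<in> V \<and> f x \<notin> D1 \<and> E (f x) x \<and> (\<forall>y\<in>D1. E (f x) y \<longrightarrow> y = x)"
    by (metis bchoice)
  have "inj_on f D1"
  proof (rule inj_onI)
    fix x y assume "x \<in> D1" "y \<in> D1" "f x = f y"
    thus "x = y" using f[of x] f[of y] by simp
  qed
  moreover have "f ` D1 \<subseteq> D2" using f cover by blast
  ultimately have f_onto: "f ` D1 = D2"
    using D gamma_set_finite by (intro card_subset_eq) (auto simp: card_image gamma_sets_iff)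
  obtain x x' where xx: "x \<in> D1" "x' \<in> D1" "x \<noteq> x'"
    using D(1) gamma_ge_2 two_distinct_elements by (metis gamma_sets_iff)
  have x: "x \<in> V" "\<not> critical x" using xx gamma_set_subset[OF D(1)] noncrit by auto
  define T where "T = insert (f x) (D1 - {x})"
  have "dominating (V - {x}) (del_vertex_E E x) T"
    unfolding dominating_del_iff
  proof
    show "T \<subseteq> V - {x}" using f[OF xx(1)] gamma_set_subset[OF D(1)] edge_irrefl unfolding T_def by auto
    show "\<forall>y\<in>V - {x} - T. \<exists>u\<in>T. E y u"
    proof
      fix y assume y: "y \<in> V - {x} - T"
      hence "y \<in> D2" using cover unfolding T_def by blast
      then obtain x'' where x'': "x'' \<in> D1" "y = f x''" using f_onto by blast
      hence "x'' \<noteq> x" using y unfolding T_def by blast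
      thus "\<exists>u\<in>T. E y u" using f[OF x''(1)] x'' unfolding T_def by blast
    qed
  qed
  moreover have "card T = \<gamma>"
    unfolding T_def using f[OF xx(1)] xx D(1) gamma_set_finite[OF D(1)] gamma_pos
    by (simp add: gamma_sets_iff)
  moreover have "gamma_del x \<ge> \<gamma>" using x by (simp add: critical_def)
  ultimately have "T = del_gamma_set x" using del_gamma_set_eqI[OF x(1)] by simp
  moreover have "D2 = del_gamma_set x"
    using gamma_set_avoiding_noncritical[OF x D(2)] disj xx(1) by blast
  ultimately show False using xx disj unfolding T_def by blast
qed

lemma gamma_set_no_pendant_pair:
  assumes D: "D \<in> \<Gamma>" "y \<in> D" "v \<in> D" and yv: "E y v" and pendant: "\<forall>t. E y t \<longrightarrow> t = v"
  shows False
proof -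
  have "dominating V E (D - {y})"
    unfolding dominating_iff
  proof
    show "D - {y} \<subseteq> V" using gamma_set_subset[OF D(1)] by blast
    show "\<forall>x\<in>V - (D - {y}). \<exists>u\<in>D - {y}. E x u"
    proof
      fix x assume x: "x \<in> V - (D - {y})"
      show "\<exists>u\<in>D - {y}. E x u"
      proof (cases "x = y")
        case True thus ?thesis using yv D(3) edge_irrefl by blast
      next
        case False
        then obtain u where "u \<in> D" "E x u" using x gamma_set_dominates[OF D(1)] by blast
        moreover have "u \<noteq> y" using calculation pendant edge_sym False x D(3) by blast
        ultimately show ?thesis by blast
      qed
    qed
  qed
  hence "\<gamma> \<le> card (D - {y})" by (rule gamma_le)
  thus False using D gamma_set_finite gamma_pos by (simp add: gamma_sets_iff)
qed

lemma noncritical_del_gamma_set: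
  assumes v: "v \<in> V" "\<not> critical v"
  shows "del_gamma_set v \<in> \<Gamma>" and "gamma_del v = \<gamma>"
proof -
  obtain D where D: "D \<in> \<Gamma>" "v \<notin> D" by (rule noncritical_avoided[OF v])
  thus "del_gamma_set v \<in> \<Gamma>" using gamma_set_avoiding_noncritical[OF v] by simp
  have "gamma_del v \<le> \<gamma>"
    using gamma_del_le dominating_del_if_avoids D by (fastforce simp: gamma_sets_iff)
  thus "gamma_del v = \<gamma>" using v(2) by (simp add: critical_def)
qed

lemma noncritical_in_other_gamma_set:
  assumes v: "v \<in> V" "\<not> critical v" and D: "D \<in> \<Gamma>"
  obtains D' where "D' \<in> \<Gamma>" "v \<in> D'" "D' \<noteq> D"
proof -
  obtain D1 D2 where D12: "D1 \<in> \<Gamma>" "D2 \<in> \<Gamma>" "D1 \<noteq> D2" by (rule two_gamma_sets)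
  then obtain D3 where D3: "D3 \<in> \<Gamma>" "D3 \<noteq> D1" "D3 \<noteq> D2" using third_gamma_set by blast
  have avoid: "v \<notin> D' \<Longrightarrow> D' \<in> \<Gamma> \<Longrightarrow> D' = del_gamma_set v" for D'
    using gamma_set_avoiding_noncritical[OF v] by blast
  show thesis
  proof (cases "v \<in> D1 \<and> v \<in> D2")
    case True thus thesis using that D12 by blast
  next
    case False
    hence "v \<in> D3" "v \<in> D1 \<or> v \<in> D2" using avoid D12 D3 by metis+
    thus thesis using that D12 D3 by metis
  qed
qed

lemma private_neighbour_of_noncritical:
  assumes v: "v \<in> V" "\<not> critical v" and D: "D \<in> \<Gamma>" "v \<in> D"
    and p: "p \<in> V" "p \<notin> D" "E p v" "\<forall>x\<in>D. E p x \<longrightarrow> x = v"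
  shows "critical p" and "\<forall>t. E p t \<longrightarrow> t = v"
    and "insert p (del_gamma_set p) = del_gamma_set v"
proof -
  obtain D' where D': "D' \<in> \<Gamma>" "v \<in> D'" "D' \<noteq> D"
    by (rule noncritical_in_other_gamma_set[OF v D(1)])
  show crit: "critical p" by (rule private_neighbour_critical[OF p(1) D(1) D'(1) D'(3)[symmetric] D(2) D'(2) p(2-4)])
  have v_out: "v \<notin> insert p (del_gamma_set p)"
    using critical_del_gamma_set_nonadjacent[OF p(1) crit] p(2,3) D(2) by blast
  have avoid: "D'' = del_gamma_set v" if "D'' \<in> \<Gamma>" "v \<notin> D''" for D''
    using gamma_set_avoiding_noncritical[OF v that] .
  show eq: "insert p (del_gamma_set p) = del_gamma_set v"
    using avoid[OF critical_insert_gamma_set[OF p(1) crit] v_out] by simp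
  show "\<forall>t. E p t \<longrightarrow> t = v"
  proof (intro allI impI)
    fix t assume t: "E p t"
    show "t = v"
    proof (rule ccontr)
      assume "t \<noteq> v"
      hence "insert t (del_gamma_set p) = del_gamma_set v"
        using avoid[OF critical_insert_gamma_set[OF p(1) crit]] t v_out by simp
      hence "p \<in> insert t (del_gamma_set p)" using eq by blast
      hence "t = p" using del_gamma_set_subset[OF p(1)] by blast
      thus False using t edge_irrefl by simp
    qed
  qed
qed

lemma all_critical:
  assumes v: "v \<in> V" shows "critical v"
proof (rule ccontr)
  assume noncrit: "\<not> critical v"
  note v' = v noncrit
  obtain D1 where D1: "D1 \<in> \<Gamma>" "v \<in> D1"
    by (rule noncritical_in_other_gamma_set[OF v' noncritical_del_gamma_set(1)[OF v']])
  obtain p where p: "p \<in> V" "p \<notin> D1" "E p v" "\<forall>x\<in>D1. E p x \<longrightarrow> x = v"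
    by (rule noncritical_private_neighbour[OF v' D1(1,2)])
  note pendant_p = private_neighbour_of_noncritical[OF v' D1(1,2) p]
  define U where "U = insert v (del_gamma_set p)"
  have U: "U \<in> \<Gamma>" unfolding U_def using critical_insert_gamma_set[OF p(1) pendant_p(1)] p(3) by simp
  obtain D' where D': "D' \<in> \<Gamma>" "v \<in> D'" "D' \<noteq> U" by (rule noncritical_in_other_gamma_set[OF v' U])
  have p_out: "p \<notin> D'"
  proof
    assume "p \<in> D'"
    from gamma_set_no_pendant_pair[OF D'(1) this D'(2) p(3) pendant_p(2)] show False .
  qed
  define T where "T = insert p (D' - {v})"
  show False
  proof (cases "dominating (V - {v}) (del_vertex_E E v) T")
    case True
    have "card T = \<gamma>" unfolding T_def using p_out D' gamma_set_finite gamma_pos by (simp add: gamma_sets_iff)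
    hence "T = insert p (del_gamma_set p)"
      using del_gamma_set_eqI[OF v True] noncritical_del_gamma_set(2)[OF v'] pendant_p(3) by simp
    moreover have "p \<notin> D' - {v}" "p \<notin> del_gamma_set p" using p_out del_gamma_set_subset[OF p(1)] by auto
    ultimately have "D' - {v} = del_gamma_set p" unfolding T_def by (simp add: insert_ident)
    hence "D' = U" unfolding U_def using D'(2) by blast
    thus False using D'(3) by blast
  next
    case False
    have "p \<noteq> v" using p(3) edge_irrefl by blast
    hence "T \<subseteq> V - {v}" unfolding T_def using p(1) gamma_set_subset[OF D'(1)] by blast
    then obtain y where y: "y \<in> V - {v} - T" "\<forall>u\<in>T. \<not> E y u"
      using False unfolding dominating_del_iff by blast
    have y_out: "y \<notin> D'" and y_pn: "\<forall>x\<in>D'. E y x \<longrightarrow> x = v" using y unfolding T_def by auto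
    then obtain u where "u \<in> D'" "E y u" using y(1) gamma_set_dominates[OF D'(1)] by blast
    hence yv: "E y v" using y_pn by blast
    have "y \<in> V" using y(1) by blast
    note pendant_y = private_neighbour_of_noncritical[OF v' D'(1,2) this y_out yv y_pn]
    have "y \<noteq> p" using y unfolding T_def by blast
    hence "y \<in> U" using y pendant_y(3) pendant_p(3) unfolding U_def by blast
    from gamma_set_no_pendant_pair[OF U this _ yv pendant_y(2)] show False unfolding U_def by blast
  qed
qed

lemma min_degree_ge_2: "min_degree V E \<ge> 2"
proof -
  have "degree V E v \<ge> 2" if v: "v \<in> V" for v
  proof -
    obtain u where u: "E v u" by (rule no_isolated_vertex[OF v])
    have uV: "u \<in> V" using u edge_in_V by blast
    have "v \<notin> del_gamma_set u"
      using critical_del_gamma_set_nonadjacent[OF uV all_critical[OF uV]] u edge_sym by blast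
    moreover have "v \<in> V - {u}" using v u edge_irrefl by blast
    ultimately obtain w where w: "w \<in> del_gamma_set u" "E v w"
      using del_gamma_set(1)[OF uV] unfolding dominating_del_iff by blast
    have "u \<noteq> w" using w(1) del_gamma_set_subset[OF uV] by blast
    moreover have "{u, w} \<subseteq> {x \<in> V. E v x}" using u w(2) edge_in_V by blast
    hence "card {u, w} \<le> degree V E v"
      unfolding degree_def using finite_V by (intro card_mono) auto
    ultimately show ?thesis by simp
  qed
  thus ?thesis unfolding min_degree_def using finite_V V_nonempty by simp
qed

lemma card_del_gamma_set: "v \<in> V \<Longrightarrow> card (del_gamma_set v) = \<gamma> - 1"
  using del_gamma_set(2) critical_gamma_del all_critical by simp

context
  fixes V1 V2 a b
  assumes partition: "V1 \<union> V2 = V" "V1 \<inter> V2 = {}" and a: "a \<in> V1" and b: "b \<in> V2"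
    and cut: "\<forall>x y. E x y \<longrightarrow> x \<in> V1 \<longrightarrow> y \<in> V2 \<longrightarrow> x = a \<and> y = b"
begin

private lemma a_in_V: "a \<in> V" and b_in_V: "b \<in> V"
  using a b partition by auto

private lemma neighbour_side:
  "x \<in> V1 \<Longrightarrow> E x u \<Longrightarrow> u \<noteq> b \<Longrightarrow> u \<in> V1"
  "x \<in> V2 \<Longrightarrow> E x u \<Longrightarrow> u \<noteq> a \<Longrightarrow> u \<in> V2"
  using cut partition edge_in_V edge_sym by blast+

private lemma card_split: "S \<subseteq> V \<Longrightarrow> card S = card (S \<inter> V1) + card (S \<inter> V2)"
proof -
  assume S: "S \<subseteq> V"
  hence "S = (S \<inter> V1) \<union> (S \<inter> V2)" using partition by blast
  moreover have "finite S" using S finite_V finite_subset by blast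
  moreover have "(S \<inter> V1) \<inter> (S \<inter> V2) = {}" using partition by blast
  ultimately show ?thesis using card_Un_disjoint[of "S \<inter> V1" "S \<inter> V2"] by simp
qed

private lemma swapped_dominating:
  "dominating V E ((del_gamma_set b \<inter> V1) \<union> (del_gamma_set a \<inter> V2))"
  unfolding dominating_iff
proof
  show "(del_gamma_set b \<inter> V1) \<union> (del_gamma_set a \<inter> V2) \<subseteq> V" using partition by blast
  show "\<forall>x\<in>V - ((del_gamma_set b \<inter> V1) \<union> (del_gamma_set a \<inter> V2)).
          \<exists>u\<in>(del_gamma_set b \<inter> V1) \<union> (del_gamma_set a \<inter> V2). E x u"
  proof
    fix x assume x: "x \<in> V - ((del_gamma_set b \<inter> V1) \<union> (del_gamma_set a \<inter> V2))"
    show "\<exists>u\<in>(del_gamma_set b \<inter> V1) \<union> (del_gamma_set a \<inter> V2). E x u"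
    proof (cases "x \<in> V1")
      case True
      hence "x \<in> V - {b} - del_gamma_set b" using x partition b by blast
      then obtain u where "u \<in> del_gamma_set b" "E x u"
        using del_gamma_set(1)[OF b_in_V] unfolding dominating_del_iff by blast
      moreover have "u \<in> V1"
        using neighbour_side(1)[OF True] calculation del_gamma_set_subset[OF b_in_V] by blast
      ultimately show ?thesis by blast
    next
      case False
      hence x2: "x \<in> V2" using x partition by blast
      hence "x \<in> V - {a} - del_gamma_set a" using x partition a by blast
      then obtain u where "u \<in> del_gamma_set a" "E x u"
        using del_gamma_set(1)[OF a_in_V] unfolding dominating_del_iff by blast
      moreover have "u \<in> V2"
        using neighbour_side(2)[OF x2] calculation del_gamma_set_subset[OF a_in_V] by blast
      ultimately show ?thesis by blast
    qed
  qed
qed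

private lemma recombined_dominating_del:
  "dominating (V - {b}) (del_vertex_E E b) ((del_gamma_set a \<inter> V1) \<union> (del_gamma_set b \<inter> V2) \<union> {a})"
  (is "dominating _ _ ?T")
  unfolding dominating_del_iff
proof
  have "a \<noteq> b" using a b partition by blast
  thus "?T \<subseteq> V - {b}"
    using del_gamma_set_subset[OF a_in_V] del_gamma_set_subset[OF b_in_V] a_in_V b partition(2)
    by blast
  show "\<forall>x\<in>V - {b} - ?T. \<exists>u\<in>?T. E x u"
  proof
    fix x assume x: "x \<in> V - {b} - ?T"
    show "\<exists>u\<in>?T. E x u"
    proof (cases "x \<in> V1")
      case True
      hence "x \<in> V - {a} - del_gamma_set a" using x by blast
      then obtain u where u: "u \<in> del_gamma_set a" "E x u"
        using del_gamma_set(1)[OF a_in_V] unfolding dominating_del_iff by blast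
      moreover have "u \<in> V1"
      proof (rule ccontr)
        assume "u \<notin> V1"
        hence "u \<in> V2" using u(1) del_gamma_set_subset[OF a_in_V] partition(1) by blast
        hence "x = a" using cut u(2) True by blast
        thus False using x by blast
      qed
      ultimately show ?thesis by blast
    next
      case False
      hence x2: "x \<in> V2" using x partition by blast
      hence "x \<in> V - {b} - del_gamma_set b" using x by blast
      then obtain u where "u \<in> del_gamma_set b" "E x u"
        using del_gamma_set(1)[OF b_in_V] unfolding dominating_del_iff by blast
      moreover have "u \<noteq> a"
      proof
        assume "u = a"
        hence "x = b" using cut a x2 edge_sym[OF \<open>E x u\<close>] by blast
        thus False using x by blast
      qed
      hence "u \<in> V2" using neighbour_side(2)[OF x2] calculation by blast
      ultimately show ?thesis by blast
    qed
  qed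
qed

text \<open>Exchanging the sides of the \<gamma>-sets of G - a and G - b across the cut gives a
  dominating set of G; counting then shows that the recombined set below is small enough
  to be the \<gamma>-set of G - b.\<close>
lemma del_gamma_set_across_cut:
  "del_gamma_set b = (del_gamma_set a \<inter> V1) \<union> (del_gamma_set b \<inter> V2) \<union> {a}"
proof -
  let ?Sa = "del_gamma_set a" and ?Sb = "del_gamma_set b"
  have "\<gamma> \<le> card ((?Sb \<inter> V1) \<union> (?Sa \<inter> V2))" by (rule gamma_le[OF swapped_dominating])
  also have "\<dots> = card (?Sb \<inter> V1) + card (?Sa \<inter> V2)"
    using partition del_gamma_set_finite[OF a_in_V] del_gamma_set_finite[OF b_in_V]
    by (intro card_Un_disjoint) auto
  finally have "card (?Sa \<inter> V1) + card (?Sb \<inter> V2) + 1 \<le> \<gamma> - 1"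
    using card_split[OF del_gamma_set_subset[OF a_in_V, THEN subset_trans]]
      card_split[OF del_gamma_set_subset[OF b_in_V, THEN subset_trans]]
      card_del_gamma_set[OF a_in_V] card_del_gamma_set[OF b_in_V] gamma_ge_2 by fastforce
  moreover have "card ((?Sa \<inter> V1) \<union> (?Sb \<inter> V2) \<union> {a}) \<le> card (?Sa \<inter> V1) + card (?Sb \<inter> V2) + 1"
    using card_Un_le[of "?Sa \<inter> V1" "?Sb \<inter> V2"] card_Un_le[of "(?Sa \<inter> V1) \<union> (?Sb \<inter> V2)" "{a}"]
    by simp
  ultimately show ?thesis
    using del_gamma_set_eqI[OF b_in_V recombined_dominating_del] card_del_gamma_set[OF b_in_V]
      del_gamma_set(2)[OF b_in_V] by simp
qed

end

lemma no_single_edge_cut: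
  assumes partition: "V1 \<union> V2 = V" "V1 \<inter> V2 = {}" and a: "a \<in> V1" and b: "b \<in> V2"
    and cut: "\<forall>x y. E x y \<longrightarrow> x \<in> V1 \<longrightarrow> y \<in> V2 \<longrightarrow> x = a \<and> y = b"
  shows False
proof (cases "E a b")
  case True
  have "b \<in> V" using b partition by blast
  moreover have "a \<in> del_gamma_set b" using del_gamma_set_across_cut[OF assms] by blast
  ultimately show False
    using critical_del_gamma_set_nonadjacent[OF \<open>b \<in> V\<close> all_critical[OF \<open>b \<in> V\<close>]] True edge_sym
    by blast
next
  case False
  hence no_cross: "\<forall>x y. E x y \<longrightarrow> x \<in> V1 \<longrightarrow> y \<in> V2 \<longrightarrow> x = a' \<and> y = b'" for a' b'
    using cut by blast
  have no_cross': "\<forall>x y. E x y \<longrightarrow> x \<in> V2 \<longrightarrow> y \<in> V1 \<longrightarrow> x = a' \<and> y = b'" for a' b'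
    using no_cross edge_sym by blast
  have partition': "V2 \<union> V1 = V" "V2 \<inter> V1 = {}" using partition by auto
  have bV: "b \<in> V" using b partition by blast
  have "V - {b} \<subseteq> del_gamma_set b"
  proof
    fix x assume x: "x \<in> V - {b}"
    show "x \<in> del_gamma_set b"
    proof (cases "x \<in> V1")
      case True
      thus ?thesis using del_gamma_set_across_cut[OF partition True b no_cross] by blast
    next
      case False
      hence x2: "x \<in> V2" using x partition by blast
      have "x \<in> del_gamma_set a" using del_gamma_set_across_cut[OF partition' x2 a no_cross'] by blast
      thus ?thesis using del_gamma_set_across_cut[OF partition' b a no_cross'] x x2 partition by blast
    qed
  qed
  hence "card (V - {b}) \<le> \<gamma> - 1"
    using card_mono[OF del_gamma_set_finite[OF bV]] card_del_gamma_set[OF bV] by simp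
  hence "card V \<le> \<gamma>" using bV finite_V gamma_pos by simp
  hence "D = V" if "D \<in> \<Gamma>" for D
    using that gamma_set_subset[OF that] finite_V card_seteq[of V D] by (simp add: gamma_sets_iff)
  moreover obtain D1 D2 where "D1 \<in> \<Gamma>" "D2 \<in> \<Gamma>" "D1 \<noteq> D2" by (rule two_gamma_sets)
  ultimately show False by blast
qed

lemma two_edge_connected: "two_edge_connected V E"
proof (rule two_edge_connectedI[OF simple V_nonempty])
  fix V1 a b
  assume "V1 \<subseteq> V" "a \<in> V1" "b \<in> V - V1"
    and "\<forall>x y. E x y \<longrightarrow> x \<in> V1 \<longrightarrow> y \<in> V - V1 \<longrightarrow> x = a \<and> y = b"
  thus False using no_single_edge_cut[of V1 "V - V1" a b] by blast
qed

end

section \<open>Domination in paths and cycles\<close>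

definition path_E :: "nat \<Rightarrow> nat \<Rightarrow> nat \<Rightarrow> bool" where
  "path_E m i j \<longleftrightarrow> i < m \<and> j < m \<and> (j = Suc i \<or> i = Suc j)"

abbreviation path_dominating :: "nat \<Rightarrow> nat set \<Rightarrow> bool" where
  "path_dominating m D \<equiv> dominating {0..<m} (path_E m) D"

lemma path_dominating_iff:
  "path_dominating m D \<longleftrightarrow>
     D \<subseteq> {0..<m} \<and> (\<forall>y<m. y \<notin> D \<longrightarrow> Suc y \<in> D \<or> (0 < y \<and> y - 1 \<in> D))"
proof -
  have eq: "(\<exists>u\<in>D. path_E m y u) \<longleftrightarrow> Suc y \<in> D \<or> (0 < y \<and> y - 1 \<in> D)"
    if D: "D \<subseteq> {0..<m}" and y: "y < m" for y
  proof
    assume "\<exists>u\<in>D. path_E m y u"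
    thus "Suc y \<in> D \<or> (0 < y \<and> y - 1 \<in> D)" by (auto simp: path_E_def)
  next
    assume "Suc y \<in> D \<or> (0 < y \<and> y - 1 \<in> D)"
    moreover have "Suc y \<in> D \<Longrightarrow> path_E m y (Suc y)" using D y by (auto simp: path_E_def)
    moreover have "0 < y \<Longrightarrow> path_E m y (y - 1)" using y by (auto simp: path_E_def)
    ultimately show "\<exists>u\<in>D. path_E m y u" by blast
  qed
  show ?thesis
  proof
    assume "path_dominating m D"
    hence D: "D \<subseteq> {0..<m}" and dom: "\<forall>y\<in>{0..<m} - D. \<exists>u\<in>D. path_E m y u"
      by (simp_all add: dominating_def)
    thus "D \<subseteq> {0..<m} \<and> (\<forall>y<m. y \<notin> D \<longrightarrow> Suc y \<in> D \<or> (0 < y \<and> y - 1 \<in> D))"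
      using eq by simp
  next
    assume "D \<subseteq> {0..<m} \<and> (\<forall>y<m. y \<notin> D \<longrightarrow> Suc y \<in> D \<or> (0 < y \<and> y - 1 \<in> D))"
    thus "path_dominating m D" using eq unfolding dominating_def by simp
  qed
qed

lemma path_dominatingD:
  "path_dominating m D \<Longrightarrow> y < m \<Longrightarrow> y \<notin> D \<Longrightarrow> Suc y \<in> D \<or> (0 < y \<and> y - 1 \<in> D)"
  by (simp add: path_dominating_iff)

lemma path_dominating_last: "path_dominating (Suc (Suc m)) D \<Longrightarrow> m \<in> D \<or> Suc m \<in> D"
  using path_dominatingD[of "Suc (Suc m)" D "Suc m"] by (auto simp: path_dominating_iff)

lemma path_dominating_card: "path_dominating m D \<Longrightarrow> m \<le> 3 * card D"
proof -
  assume dom: "path_dominating m D"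
  hence "finite D" using path_dominating_iff finite_subset by blast
  have "{0..<m} \<subseteq> (\<Union>x\<in>D. {x - 1, x, Suc x})"
  proof
    fix y assume "y \<in> {0..<m}"
    hence "y \<in> D \<or> Suc y \<in> D \<or> (0 < y \<and> y - 1 \<in> D)" using dom by (auto simp: path_dominating_iff)
    thus "y \<in> (\<Union>x\<in>D. {x - 1, x, Suc x})"
    proof (elim disjE conjE)
      assume "y \<in> D" thus ?thesis by (intro UN_I[of y]) auto
    next
      assume "Suc y \<in> D" thus ?thesis by (intro UN_I[of "Suc y"]) auto
    next
      assume "0 < y" "y - 1 \<in> D" thus ?thesis by (intro UN_I[of "y - 1"]) auto
    qed
  qed
  hence "m \<le> card (\<Union>x\<in>D. {x - 1, x, Suc x})"
    using \<open>finite D\<close> card_mono[of "\<Union>x\<in>D. {x - 1, x, Suc x}" "{0..<m}"] by simp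
  also have "\<dots> \<le> (\<Sum>x\<in>D. card {x - 1, x, Suc x})" by (rule card_UN_le[OF \<open>finite D\<close>])
  also have "\<dots> \<le> (\<Sum>x\<in>D. 3)" by (intro sum_mono) (simp add: card_insert_if)
  finally show ?thesis by simp
qed

lemma path_dominating_prefix:
  assumes "path_dominating m' D" "m \<le> m'" "m \<notin> D"
  shows "path_dominating m (D \<inter> {0..<m})"
  unfolding path_dominating_iff
proof (intro conjI allI impI)
  fix y assume y: "y < m" "y \<notin> D \<inter> {0..<m}"
  hence "Suc y \<in> D \<or> (0 < y \<and> y - 1 \<in> D)"
    using assms(1,2) unfolding path_dominating_iff by simp
  thus "Suc y \<in> D \<inter> {0..<m} \<or> (0 < y \<and> y - 1 \<in> D \<inter> {0..<m})"
    using y(1) assms(3) by (cases "Suc y = m") auto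
qed auto

lemma path_dominating_prefix_insert:
  assumes "path_dominating m' D" "0 < m" "m \<le> m'"
  shows "path_dominating m (insert (m - 1) (D \<inter> {0..<m}))"
  unfolding path_dominating_iff
proof (intro conjI allI impI)
  fix y assume y: "y < m" "y \<notin> insert (m - 1) (D \<inter> {0..<m})"
  hence "Suc y \<in> D \<or> (0 < y \<and> y - 1 \<in> D)"
    using assms(1,3) unfolding path_dominating_iff by simp
  moreover have "Suc y < m" using y by auto
  ultimately show "Suc y \<in> insert (m - 1) (D \<inter> {0..<m}) \<or>
      (0 < y \<and> y - 1 \<in> insert (m - 1) (D \<inter> {0..<m}))"
    using y(1) by auto
qed (use assms(2) in auto)

definition path_gamma_set :: "nat \<Rightarrow> nat set" where
  "path_gamma_set k = (\<lambda>j. 3 * j + 1) ` {0..<k}"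

lemma mem_path_gamma_set: "x \<in> path_gamma_set k \<longleftrightarrow> (\<exists>j<k. x = 3 * j + 1)"
  unfolding path_gamma_set_def by auto

lemma card_path_gamma_set: "card (path_gamma_set k) = k"
  unfolding path_gamma_set_def by (subst card_image) (auto simp: inj_on_def)

lemma path_gamma_set_less: "x \<in> path_gamma_set k \<Longrightarrow> x < 3 * k"
  unfolding mem_path_gamma_set by auto

lemma last_but_one_notin_path_gamma_set: "0 < k \<Longrightarrow> 3 * k - 1 \<notin> path_gamma_set k"
  unfolding mem_path_gamma_set by presburger

lemma path_gamma_set_Suc: "path_gamma_set (Suc k) = insert (3 * k + 1) (path_gamma_set k)"
  by (simp add: path_gamma_set_def atLeast0_lessThan_Suc)

lemma path_gamma_set_dominates:
  "y < 3 * k \<Longrightarrow> y \<notin> path_gamma_set k \<Longrightarrow> Suc y \<in> path_gamma_set k \<or> (0 < y \<and> y - 1 \<in> path_gamma_set k)"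
  unfolding mem_path_gamma_set by presburger

lemma path_dominating_path_gamma_set: "path_dominating (3 * k) (path_gamma_set k)"
  unfolding path_dominating_iff using path_gamma_set_dominates path_gamma_set_less by auto

lemma path_dominating_unique:
  "path_dominating (3 * k) D \<Longrightarrow> card D \<le> k \<Longrightarrow> D = path_gamma_set k"
proof (induction k arbitrary: D)
  case 0
  thus ?case by (simp add: dominating_def path_gamma_set_def)
next
  case (Suc k)
  have "3 * Suc k = Suc (Suc (3 * k + 1))" by simp
  hence dom: "path_dominating (Suc (Suc (3 * k + 1))) D" using Suc.prems(1) by metis
  hence "finite D" and D_sub: "D \<subseteq> {0..<3 * k + 3}"
    using finite_subset by (auto simp: path_dominating_iff)
  have tail: "3 * k + 1 \<in> D \<or> 3 * k + 2 \<in> D" using path_dominating_last[OF dom] by simp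
  define D0 where "D0 = D \<inter> {0..<3 * k}"
  define D1 where "D1 = D \<inter> {3 * k..<3 * k + 3}"
  have D_split: "D = D0 \<union> D1" unfolding D0_def D1_def using D_sub by auto
  moreover have "D0 \<inter> D1 = {}" unfolding D0_def D1_def by auto
  ultimately have card_D: "card D = card D0 + card D1"
    using \<open>finite D\<close> card_Un_disjoint[of D0 D1] by (simp add: D0_def D1_def)
  have "finite D1" using \<open>finite D\<close> unfolding D1_def by simp
  show ?case
  proof (cases "3 * k \<in> D")
    case False
    have "D1 \<noteq> {}" using tail unfolding D1_def by auto
    hence "card D0 \<le> k" using card_D Suc.prems(2) \<open>finite D1\<close> card_0_eq[of D1] by linarith
    moreover have "path_dominating (3 * k) D0"
      unfolding D0_def by (rule path_dominating_prefix[OF dom _ False]) simp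
    ultimately have D0: "D0 = path_gamma_set k" using Suc.IH by simp
    hence "card D1 \<le> 1" using card_D Suc.prems(2) card_path_gamma_set by simp
    have "3 * k + 1 \<in> D"
    proof (rule ccontr)
      assume "3 * k + 1 \<notin> D"
      hence "0 < k" "3 * k - 1 \<in> D0"
        using path_dominatingD[OF dom _ False] unfolding D0_def by auto
      thus False using last_but_one_notin_path_gamma_set D0 by blast
    qed
    hence "D1 = {3 * k + 1}"
      using \<open>card D1 \<le> 1\<close> \<open>finite D1\<close> card_le_Suc0_iff_eq[of D1] unfolding D1_def by auto
    thus ?thesis using D_split D0 path_gamma_set_Suc by simp
  next
    case True
    obtain z where "z \<in> D" "z = 3 * k + 1 \<or> z = 3 * k + 2" using tail by blast
    hence "{3 * k, z} \<subseteq> D1" "card {3 * k, z} = 2" using True unfolding D1_def by auto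
    hence "card D0 + 1 \<le> k"
      using card_mono[OF \<open>finite D1\<close>, of "{3 * k, z}"] card_D Suc.prems(2) by simp
    moreover have "path_dominating (3 * k) (insert (3 * k - 1) D0)"
      unfolding D0_def by (rule path_dominating_prefix_insert[OF dom]) (use calculation in simp_all)
    ultimately have "insert (3 * k - 1) D0 = path_gamma_set k"
      using Suc.IH card_insert_le_m1[of k D0] by simp
    thus ?thesis using last_but_one_notin_path_gamma_set[of k] \<open>card D0 + 1 \<le> k\<close> by auto
  qed
qed

lemma path_gamma_lower_bound: "m \<le> 3 * gamma {0..<m} (path_E m)"
proof -
  obtain D where "path_dominating m D" "card D = gamma {0..<m} (path_E m)"
    by (rule gamma_attained[OF finite_atLeastLessThan])
  thus ?thesis using path_dominating_card by metis
qed

lemma card_path_gamma_sets_3k: "card (gamma_sets {0..<3 * k} (path_E (3 * k))) = 1"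
proof -
  let ?P = "path_E (3 * k)"
  have "gamma {0..<3 * k} ?P \<le> k"
    using gamma_le_card[OF _ path_dominating_path_gamma_set] card_path_gamma_set by simp
  hence gamma: "gamma {0..<3 * k} ?P = k" using path_gamma_lower_bound[of "3 * k"] by linarith
  have "gamma_sets {0..<3 * k} ?P = {path_gamma_set k}"
    using path_dominating_unique path_dominating_path_gamma_set card_path_gamma_set gamma
    by (auto simp: gamma_sets_def)
  thus ?thesis by simp
qed

lemma path_dominating_insert_last:
  assumes "3 * k < m" "m \<le> 3 * k + 2" "z = m - 1 \<or> z = m - 2"
  shows "path_dominating m (insert z (path_gamma_set k))"
  unfolding path_dominating_iff
proof (intro conjI allI impI)
  show "insert z (path_gamma_set k) \<subseteq> {0..<m}"
    using assms path_gamma_set_less by fastforce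
  fix y assume y: "y < m" "y \<notin> insert z (path_gamma_set k)"
  show "Suc y \<in> insert z (path_gamma_set k) \<or> (0 < y \<and> y - 1 \<in> insert z (path_gamma_set k))"
  proof (cases "y < 3 * k")
    case True thus ?thesis using path_gamma_set_dominates y(2) by blast
  next
    case False
    hence "y = m - 1 \<or> y = m - 2" "y \<noteq> z" using y assms(2) by auto
    thus ?thesis using assms(3) y(1) by auto
  qed
qed

lemma card_path_gamma_sets_not_3k:
  assumes "\<not> 3 dvd m" "2 \<le> m"
  shows "card (gamma_sets {0..<m} (path_E m)) \<noteq> 1"
proof -
  define k where "k = m div 3"
  have m: "3 * k < m" "m \<le> 3 * k + 2" using assms(1) unfolding k_def by presburger+
  let ?D1 = "insert (m - 1) (path_gamma_set k)" and ?D2 = "insert (m - 2) (path_gamma_set k)"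
  have notin: "m - 1 \<notin> path_gamma_set k" "m - 2 \<notin> path_gamma_set k"
    using m unfolding mem_path_gamma_set by presburger+
  have dom: "path_dominating m ?D1" "path_dominating m ?D2"
    using path_dominating_insert_last m by auto
  have card: "card ?D1 = k + 1" "card ?D2 = k + 1"
    using notin card_path_gamma_set by (simp_all add: path_gamma_set_def)
  have "k + 1 \<le> gamma {0..<m} (path_E m)" using path_gamma_lower_bound[of m] m by linarith
  moreover have "gamma {0..<m} (path_E m) \<le> k + 1"
    using gamma_le_card[OF _ dom(1)] card(1) by simp
  ultimately have "?D1 \<in> gamma_sets {0..<m} (path_E m)" "?D2 \<in> gamma_sets {0..<m} (path_E m)"
    using dom card by (simp_all add: gamma_sets_def)
  moreover have "?D1 \<noteq> ?D2"
  proof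
    assume "?D1 = ?D2"
    hence "m - 1 \<in> ?D2" by blast
    thus False using notin(1) assms(2) by simp
  qed
  ultimately have "2 \<le> card (gamma_sets {0..<m} (path_E m))"
    by (intro two_le_card_gamma_sets) simp_all
  thus ?thesis by simp
qed

lemma card_path_gamma_sets_eq_1_iff:
  assumes "2 \<le> m"
  shows "card (gamma_sets {0..<m} (path_E m)) = 1 \<longleftrightarrow> 3 dvd m"
proof
  assume "card (gamma_sets {0..<m} (path_E m)) = 1"
  thus "3 dvd m" using card_path_gamma_sets_not_3k[OF _ assms] by blast
next
  assume "3 dvd m"
  then obtain k where "m = 3 * k" by (rule dvdE)
  thus "card (gamma_sets {0..<m} (path_E m)) = 1" using card_path_gamma_sets_3k by simp
qed

definition cycle_rotate :: "nat \<Rightarrow> nat \<Rightarrow> nat \<Rightarrow> nat" where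
  "cycle_rotate n c i = (i + c) mod n"

lemma graph_iso_cycle_rotate:
  assumes n: "0 < n"
  shows "graph_iso (cycle_rotate n c) {0..<n} (cycle_graph_E n) {0..<n} (cycle_graph_E n)"
proof -
  have cancel: "(i + c) mod n = (j + c) mod n \<longleftrightarrow> i mod n = j mod n" for i j
    using cong_add_rcancel_nat[of i c j n] by (simp add: cong_def)
  have inj: "inj_on (cycle_rotate n c) {0..<n}"
    by (rule inj_onI) (simp add: cycle_rotate_def cancel)
  moreover have "cycle_rotate n c ` {0..<n} = {0..<n}"
    using inj n by (intro endo_inj_surj) (auto simp: cycle_rotate_def)
  moreover have "cycle_graph_E n i j \<longleftrightarrow> cycle_graph_E n (cycle_rotate n c i) (cycle_rotate n c j)"
    if "i < n" "j < n" for i j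
  proof -
    have succ: "b = (a + 1) mod n \<longleftrightarrow> cycle_rotate n c b = (cycle_rotate n c a + 1) mod n"
      if "b < n" for a b
    proof -
      have "((a + c) mod n + 1) mod n = (a + c + 1) mod n" by (rule mod_add_left_eq)
      hence eq: "(cycle_rotate n c a + 1) mod n = (a + 1 + c) mod n"
        unfolding cycle_rotate_def by (simp add: ac_simps)
      have "cycle_rotate n c b = (cycle_rotate n c a + 1) mod n \<longleftrightarrow> (b + c) mod n = (a + 1 + c) mod n"
        by (subst eq) (simp only: cycle_rotate_def)
      also have "\<dots> \<longleftrightarrow> b mod n = (a + 1) mod n" by (rule cancel)
      finally show ?thesis using that by simp
    qed
    have "i \<noteq> j \<longleftrightarrow> cycle_rotate n c i \<noteq> cycle_rotate n c j"
      using inj that by (auto dest: inj_onD)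
    moreover have "cycle_rotate n c x < n" for x using n by (simp add: cycle_rotate_def)
    ultimately show ?thesis
      unfolding cycle_graph_E_def using that succ[OF that(2), of i] succ[OF that(1), of j] by auto
  qed
  ultimately show ?thesis by (simp add: graph_iso_def bij_betw_def)
qed

lemma cycle_del_last_vertex:
  assumes "3 \<le> n"
  shows "{0..<n} - {n - 1} = {0..<n - 1}"
    and "del_vertex_E (cycle_graph_E n) (n - 1) = path_E (n - 1)"
proof -
  show "{0..<n} - {n - 1} = {0..<n - 1}" using assms by auto
  show "del_vertex_E (cycle_graph_E n) (n - 1) = path_E (n - 1)"
  proof (intro ext)
    fix i j
    show "del_vertex_E (cycle_graph_E n) (n - 1) i j = path_E (n - 1) i j"
    proof (cases "i < n - 1 \<and> j < n - 1")
      case True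
      hence "(i + 1) mod n = i + 1" "(j + 1) mod n = j + 1" by auto
      thus ?thesis using True by (auto simp: del_vertex_E_def cycle_graph_E_def path_E_def)
    qed (auto simp: del_vertex_E_def cycle_graph_E_def path_E_def)
  qed
qed

lemma card_gamma_sets_cycle_del_vertex:
  assumes n: "3 \<le> n" and v: "v < n"
  shows "card (gamma_sets ({0..<n} - {v}) (del_vertex_E (cycle_graph_E n) v))
       = card (gamma_sets {0..<n - 1} (path_E (n - 1)))"
proof -
  let ?C = "cycle_graph_E n" and ?r = "cycle_rotate n (n - 1 - v)"
  have iso: "graph_iso ?r {0..<n} ?C {0..<n} ?C" using graph_iso_cycle_rotate n by simp
  have "card (gamma_sets ({0..<n} - {?r v}) (del_vertex_E ?C (?r v)))
      = card (gamma_sets ({0..<n} - {v}) (del_vertex_E ?C v))"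
    by (rule card_gamma_sets_iso[OF graph_iso_del_vertex[OF iso]]) (use v in simp)
  moreover have "?r v = n - 1" using v unfolding cycle_rotate_def by simp
  ultimately show ?thesis using cycle_del_last_vertex[OF n] by simp
qed

lemma two_le_card_gamma_sets_cycle:
  assumes n: "3 \<le> n"
  shows "2 \<le> card (gamma_sets {0..<n} (cycle_graph_E n))"
proof -
  let ?C = "cycle_graph_E n" and ?r = "cycle_rotate n 1"
  obtain D where D: "D \<in> gamma_sets {0..<n} ?C"
    using gamma_attained[OF finite_atLeastLessThan] unfolding gamma_sets_def by blast
  hence D_sub: "D \<subseteq> {0..<n}" by (simp add: gamma_sets_def dominating_def)
  have iso: "graph_iso ?r {0..<n} ?C {0..<n} ?C" using graph_iso_cycle_rotate n by simp
  have rD: "?r ` D \<in> gamma_sets {0..<n} ?C"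
    by (subst gamma_sets_iso[OF iso]) (use D in blast)
  show ?thesis
  proof (cases "?r ` D = D")
    case False thus ?thesis using two_le_card_gamma_sets[OF _ D rD] by auto
  next
    case True
    text \<open>A rotation-invariant dominating set is the whole cycle, but n - 1 vertices suffice.\<close>
    have "\<forall>v\<in>{0..<n} - D. \<exists>u\<in>D. ?C v u" using D by (simp add: gamma_sets_def dominating_def)
    moreover have "(0::nat) \<in> {0..<n}" using n by simp
    ultimately have "D \<noteq> {}" by blast
    then obtain x where x: "x \<in> D" by blast
    have orbit: "(x + j) mod n \<in> D" for j
    proof (induction j)
      case 0 thus ?case using x D_sub by auto
    next
      case (Suc j)
      hence "?r ((x + j) mod n) \<in> D" using True by blast
      thus ?case by (simp add: cycle_rotate_def mod_simps)
    qed
    have "y \<in> D" if "y < n" for y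
    proof -
      have "(x + (y + n - x)) mod n = y" using that x D_sub by auto
      thus ?thesis using orbit[of "y + n - x"] by simp
    qed
    hence "D = {0..<n}" using D_sub by auto
    moreover have "dominating {0..<n} ?C {1..<n}"
      using n by (auto simp: dominating_def cycle_graph_E_def intro: bexI[of _ 1])
    hence "gamma {0..<n} ?C \<le> n - 1" using gamma_le_card[of "{0..<n}"] by fastforce
    ultimately show ?thesis using D n by (simp add: gamma_sets_def)
  qed
qed

lemma hypo_unique_domination_cycle_iff:
  assumes n: "3 \<le> n"
  shows "hypo_unique_domination {0..<n} (cycle_graph_E n) \<longleftrightarrow> 3 dvd (n - 1)"
proof -
  have "(\<forall>v\<in>{0..<n}. card (gamma_sets ({0..<n} - {v}) (del_vertex_E (cycle_graph_E n) v)) = 1)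
        \<longleftrightarrow> card (gamma_sets {0..<n - 1} (path_E (n - 1))) = 1"
  proof
    assume "\<forall>v\<in>{0..<n}. card (gamma_sets ({0..<n} - {v}) (del_vertex_E (cycle_graph_E n) v)) = 1"
    thus "card (gamma_sets {0..<n - 1} (path_E (n - 1))) = 1"
      using card_gamma_sets_cycle_del_vertex[OF n, of 0] n by simp
  qed (simp add: card_gamma_sets_cycle_del_vertex[OF n])
  hence "hypo_unique_domination {0..<n} (cycle_graph_E n) \<longleftrightarrow>
        card (gamma_sets {0..<n - 1} (path_E (n - 1))) = 1"
    using two_le_card_gamma_sets_cycle[OF n] unfolding hypo_unique_domination_def by simp
  also have "\<dots> \<longleftrightarrow> 3 dvd (n - 1)" using card_path_gamma_sets_eq_1_iff n by simp
  finally show ?thesis .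
qed

section \<open>Unicyclic graphs\<close>

lemma rtranclp_distinct_path:
  assumes "R\<^sup>*\<^sup>* x y"
  obtains ps where "ps \<noteq> []" "hd ps = x" "last ps = y" "distinct ps" "successively R ps"
proof -
  from assms have "\<exists>ps. ps \<noteq> [] \<and> hd ps = x \<and> last ps = y \<and> distinct ps \<and> successively R ps"
  proof (induction rule: converse_rtranclp_induct)
    case base
    show ?case by (intro exI[of _ "[y]"]) auto
  next
    case (step x z)
    then obtain ps where ps: "ps \<noteq> []" "hd ps = z" "last ps = y" "distinct ps" "successively R ps"
      by blast
    show ?case
    proof (cases "x \<in> set ps")
      case True
      then obtain us ws where "ps = us @ x # ws" by (meson split_list)
      thus ?thesis using ps by (intro exI[of _ "x # ws"]) (auto simp: successively_append_iff)
    next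
      case False
      thus ?thesis using ps step.hyps(1) by (intro exI[of _ "x # ps"]) (auto simp: successively_Cons)
    qed
  qed
  thus thesis using that by blast
qed

text \<open>A path from b back to a avoiding the edge ab closes up to a cycle through ab.\<close>
lemma edge_on_cycle:
  assumes sg: "simple_graph V E" and tec: "two_edge_connected V E" and ab: "E a b"
  obtains ys where "is_cycle V E ys" "{a, b} \<in> cycle_edges ys"
proof -
  let ?R = "\<lambda>x y. del_edge_E E a b x y \<and> x \<in> V \<and> y \<in> V"
  have "a \<in> V" "b \<in> V" "a \<noteq> b" using sg ab by (auto simp: simple_graph_def)
  moreover have "connected_graph V (del_edge_E E a b)" using tec ab by (simp add: two_edge_connected_def)
  ultimately have "?R\<^sup>*\<^sup>* b a" unfolding connected_graph_def by blast
  then obtain ps where ps: "ps \<noteq> []" "hd ps = b" "last ps = a" "distinct ps" "successively ?R ps"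
    by (rule rtranclp_distinct_path)
  define n where "n = length ps"
  have first: "ps ! 0 = b" and last: "ps ! (n - 1) = a"
    using ps unfolding n_def by (simp_all add: hd_conv_nth last_conv_nth)
  have step: "?R (ps ! i) (ps ! Suc i)" if "Suc i < n" for i
    using successively_nth[OF ps(5)] that unfolding n_def by blast
  have "n \<noteq> 0" "n \<noteq> 1" using ps(1) first last \<open>a \<noteq> b\<close> unfolding n_def by auto
  moreover have "n \<noteq> 2"
  proof
    assume "n = 2"
    hence "?R b a" using step[of 0] first last by simp
    thus False by (auto simp: del_edge_E_def insert_commute)
  qed
  ultimately have n3: "n \<ge> 3" by linarith
  have adj: "E (ps ! i) (ps ! ((i + 1) mod n))" if "i < n" for i
  proof (cases "Suc i < n")
    case True thus ?thesis using step[OF True] by (simp add: del_edge_E_def)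
  next
    case False
    hence "i + 1 = n" using that by simp
    hence "i = n - 1" "(i + 1) mod n = 0" by auto
    thus ?thesis using last first ab by simp
  qed
  have "set ps \<subseteq> V"
  proof
    fix x assume "x \<in> set ps"
    then obtain i where "i < n" "x = ps ! i" unfolding n_def by (metis in_set_conv_nth)
    thus "x \<in> V" using adj[of i] sg by (auto simp: simple_graph_def)
  qed
  hence "is_cycle V E ps" unfolding is_cycle_def n_def[symmetric] using ps(4) n3 adj by blast
  moreover have "{a, b} \<in> cycle_edges ps"
  proof -
    have "(n - 1 + 1) mod n = 0" using n3 by simp
    hence "{a, b} = {ps ! (n - 1), ps ! ((n - 1 + 1) mod n)}" using first last by auto
    moreover have "n - 1 < n" using n3 by simp
    ultimately show ?thesis unfolding cycle_edges_def n_def[symmetric] by blast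
  qed
  ultimately show thesis using that by blast
qed

lemma isomorphic_to_cycle_if_edges_on_cycle:
  assumes sg: "simple_graph V E" and xs: "is_cycle V E xs" and V: "V = set xs"
    and edges: "\<And>a b. E a b \<Longrightarrow> {a, b} \<in> cycle_edges xs"
  shows "isomorphic_to_cycle V E (length xs)"
proof -
  define n where "n = length xs"
  have dist: "distinct xs" and n3: "n \<ge> 3"
    and adj: "\<And>i. i < n \<Longrightarrow> E (xs ! i) (xs ! ((i + 1) mod n))"
    using xs unfolding is_cycle_def n_def by auto
  have iso: "E (xs ! i) (xs ! j) \<longleftrightarrow> cycle_graph_E n i j" if i: "i < n" and j: "j < n" for i j
  proof
    assume e: "E (xs ! i) (xs ! j)"
    obtain l where l: "l < n" "{xs ! i, xs ! j} = {xs ! l, xs ! ((l + 1) mod n)}"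
      using edges[OF e] unfolding cycle_edges_def n_def by blast
    have "(l + 1) mod n < n" using n3 by simp
    hence "(i = l \<and> j = (l + 1) mod n) \<or> (i = (l + 1) mod n \<and> j = l)"
      using l nth_eq_iff_index_eq[OF dist] i j unfolding n_def doubleton_eq_iff by metis
    moreover have "i \<noteq> j" using e sg by (auto simp: simple_graph_def)
    ultimately show "cycle_graph_E n i j" unfolding cycle_graph_E_def using i j by blast
  next
    assume "cycle_graph_E n i j"
    thus "E (xs ! i) (xs ! j)" using adj sg unfolding cycle_graph_E_def simple_graph_def by blast
  qed
  have bij: "bij_betw ((!) xs) {0..<n} V"
    using bij_betw_nth[OF dist] V unfolding n_def by (simp add: lessThan_atLeast0)
  have "graph_iso (inv_into {0..<n} ((!) xs)) V E {0..<n} (cycle_graph_E n)"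
    unfolding graph_iso_def
  proof (intro conjI ballI)
    show "bij_betw (inv_into {0..<n} ((!) xs)) V {0..<n}" by (rule bij_betw_inv_into[OF bij])
    fix x y assume "x \<in> V" "y \<in> V"
    thus "E x y \<longleftrightarrow> cycle_graph_E n (inv_into {0..<n} ((!) xs) x) (inv_into {0..<n} ((!) xs) y)"
      using iso bij bij_betw_inv_into_right[OF bij] bij_betw_apply[OF bij_betw_inv_into[OF bij]]
      by (metis atLeastLessThan_iff)
  qed
  thus ?thesis unfolding isomorphic_to_cycle_iff_graph_iso n_def by blast
qed

lemma unicyclic_isomorphic_to_cycle:
  assumes sg: "simple_graph V E" and tec: "two_edge_connected V E" and uc: "unicyclic V E"
    and no_isolated: "\<And>v. v \<in> V \<Longrightarrow> \<exists>u. E v u"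
  obtains n where "n \<ge> 3" "isomorphic_to_cycle V E n"
proof -
  obtain C where C: "C \<in> {cycle_edges xs | xs. is_cycle V E xs}"
    and C_unique: "\<And>C'. C' \<in> {cycle_edges xs | xs. is_cycle V E xs} \<Longrightarrow> C' = C"
    using uc unfolding unicyclic_def by (meson ex1E)
  then obtain xs where xs: "is_cycle V E xs" and C_xs: "C = cycle_edges xs" by blast
  have edges: "{a, b} \<in> cycle_edges xs" if ab: "E a b" for a b
  proof -
    obtain ys where "is_cycle V E ys" "{a, b} \<in> cycle_edges ys" by (rule edge_on_cycle[OF sg tec ab])
    thus ?thesis using C_unique C_xs by blast
  qed
  have "V \<subseteq> set xs"
  proof
    fix v assume "v \<in> V"
    then obtain u where "E v u" using no_isolated by blast
    then obtain i where i: "i < length xs" "{v, u} = {xs ! i, xs ! ((i + 1) mod length xs)}"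
      using edges unfolding cycle_edges_def by blast
    hence "v = xs ! i \<or> v = xs ! ((i + 1) mod length xs)" by (simp add: doubleton_eq_iff) blast
    moreover have "(i + 1) mod length xs < length xs" by (rule mod_less_divisor) (use i(1) in linarith)
    ultimately show "v \<in> set xs" using i(1) nth_mem by metis
  qed
  hence "V = set xs" using xs unfolding is_cycle_def by blast
  hence "isomorphic_to_cycle V E (length xs)"
    by (rule isomorphic_to_cycle_if_edges_on_cycle[OF sg xs _ edges])
  moreover have "length xs \<ge> 3" using xs by (simp add: is_cycle_def)
  ultimately show thesis using that by blast
qed

lemma card_ge_3_if_cycle: "simple_graph V E \<Longrightarrow> is_cycle V E xs \<Longrightarrow> card V \<ge> 3"
  using card_mono[of V "set xs"] distinct_card[of xs] by (auto simp: is_cycle_def simple_graph_def)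

theorem corollary3p2:
  fixes V :: "'a set" and E :: "'a \<Rightarrow> 'a \<Rightarrow> bool"
  assumes "simple_graph V E"
  shows "(hypo_unique_domination V E \<and> card V \<ge> 3 \<longrightarrow>
            two_edge_connected V E \<and> min_degree V E \<ge> 2)
       \<and> (unicyclic V E \<longrightarrow>
            (hypo_unique_domination V E \<longleftrightarrow> (\<exists>k::nat. k \<ge> 1 \<and> isomorphic_to_cycle V E (3 * k + 1))))"
proof (rule conjI; intro impI)
  assume "hypo_unique_domination V E \<and> card V \<ge> 3"
  then interpret hypo_unique_graph V E using assms by unfold_locales auto
  show "two_edge_connected V E \<and> min_degree V E \<ge> 2" using two_edge_connected min_degree_ge_2 ..
next
  assume uc: "unicyclic V E"
  have cycle_hud: "hypo_unique_domination V E \<longleftrightarrow> 3 dvd (n - 1)"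
    if "n \<ge> 3" "isomorphic_to_cycle V E n" for n
    using that hypo_unique_domination_iso hypo_unique_domination_cycle_iff
    unfolding isomorphic_to_cycle_iff_graph_iso by blast
  show "hypo_unique_domination V E \<longleftrightarrow> (\<exists>k::nat. k \<ge> 1 \<and> isomorphic_to_cycle V E (3 * k + 1))"
  proof
    assume hud: "hypo_unique_domination V E"
    obtain xs where "is_cycle V E xs" using uc unfolding unicyclic_def by blast
    then interpret hypo_unique_graph V E using assms hud card_ge_3_if_cycle by unfold_locales
    have "\<exists>u. E v u" if "v \<in> V" for v using no_isolated_vertex[OF that] by blast
    then obtain n where n: "n \<ge> 3" "isomorphic_to_cycle V E n"
      using unicyclic_isomorphic_to_cycle[OF assms two_edge_connected uc] by blast
    hence "3 dvd (n - 1)" using cycle_hud hud by blast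
    then obtain k where "n - 1 = 3 * k" by (rule dvdE)
    hence "n = 3 * k + 1" "k \<ge> 1" using n(1) by auto
    thus "\<exists>k::nat. k \<ge> 1 \<and> isomorphic_to_cycle V E (3 * k + 1)" using n(2) by auto
  next
    assume "\<exists>k::nat. k \<ge> 1 \<and> isomorphic_to_cycle V E (3 * k + 1)"
    then obtain k where "k \<ge> 1" "isomorphic_to_cycle V E (3 * k + 1)" by blast
    thus "hypo_unique_domination V E" using cycle_hud[of "3 * k + 1"] by simp
  qed
qed

end
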